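(* Let $\mathcal M$ be a local Moufang set with basis $(0,\infty)$. Then, as subsets of the little projective group, $U_0^\circ\,U_\infty\subseteq U_\infty\,H\,U_0^\circ$.
   Context: Group actions are right actions, written $xg$; conjugation is $g^h=h^{-1}gh$. For a set $X$ with an equivalence relation $\sim$, $\overline{x}$ denotes the class of $x$, $\overline X$ the set of classes, and $\mathrm{Sym}(X,\sim)$ the group of bijections $g$ of $X$ with $x\sim y\iff xg\sim yg$; each such $g$ induces a permutation $\overline g$ of $\overline X$, and for a subgroup $U\le \mathrm{Sym}(X,\sim)$, $\overline U$ is the induced group of permutations of $\overline X$. A local Moufang set consists of a set with equivalence relation $(X,\sim)$ with $|\overline X|>2$ and, for each $x\in X$, a subgroup (root group) $U_x\le\mathrm{Sym}(X,\sim)$ such that: (LM0) if $x\sim y$ then $\overline{U_x}=\overline{U_y}$; (LM1) $U_x$ fixes $x$ and acts sharply transitively on $X\setminus\overline x$; (LM1') $\overline{U_x}$ fixes $\overline x$ and acts sharply transitively on $\overline X\setminus\{\overline x\}$; (LM2) $U_x^g=U_{xg}$ for all $x\in X$ and all $g$ in the little projective group $G:=\langle U_x\mid x\in X\rangle$. A basis is a fixed pair $(0,\infty)$ with $0\not\sim\infty$. For $x\not\sim\infty$, $\alpha_x$ is the unique element of $U_\infty$ with $0\alpha_x=x$. A unit is $x\in X$ with $x\not\sim0$, $x\not\sim\infty$; for a unit $x$, $\mu_x$ is the unique element of $U_0\alpha_xU_0$ interchanging $0$ and $\infty$. The Hua subgroup is $H:=\langle\mu_x\mu_y\mid x,y\text{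 units}\rangle$. For $x\in X$, $U_x^\circ:=\{u\in U_x\mid \overline u=\mathrm{id}_{\overline X}\}$. *)

theory Defs
  imports Main
begin

text \<open>Permutations of the set X are functions 'a => 'a that are
bijective on X and the identity outside X. Groups act on the right: x g is
written g x, and the group product g h (first g, then h) is the function
h \<circ> g. Conjugation u^g = g^-1 u g is therefore g \<circ> u \<circ> inv g.\<close>

definition cls :: "'a rel \<Rightarrow> 'a set \<Rightarrow> 'a \<Rightarrow> 'a set" where
  "cls r X x = {y \<in> X. (x, y) \<in> r}"

definition SymEq :: "'a set \<Rightarrow> 'a rel \<Rightarrow> ('a \<Rightarrow> 'a) set" where
  "SymEq X r = {g. bij_betw g X X \<and> (\<forall>x. x \<notin> X \<longrightarrow> g x = x) \<and>
      (\<forall>x\<in>X. \<forall>y\<in>X. (x, y) \<in> r \<longleftrightarrow> (g x, g y) \<in> r)}"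

definition induced :: "'a set \<Rightarrow> 'a rel \<Rightarrow> ('a \<Rightarrow> 'a) \<Rightarrow> ('a set \<Rightarrow> 'a set)" where
  "induced X r g = (\<lambda>C. if C \<in> X // r then g ` C else undefined)"

definition inducedGrp :: "'a set \<Rightarrow> 'a rel \<Rightarrow> ('a \<Rightarrow> 'a) set \<Rightarrow> ('a set \<Rightarrow> 'a set) set" where
  "inducedGrp X r U = induced X r ` U"

definition is_subgroup :: "('a \<Rightarrow> 'a) set \<Rightarrow> ('a \<Rightarrow> 'a) set \<Rightarrow> bool" where
  "is_subgroup U S \<longleftrightarrow> U \<subseteq> S \<and> id \<in> U \<and> (\<forall>g\<in>U. \<forall>h\<in>U. h \<circ> g \<in> U) \<and>
      (\<forall>g\<in>U. inv g \<in> U)"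

inductive_set genGroup :: "('a \<Rightarrow> 'a) set \<Rightarrow> ('a \<Rightarrow> 'a) set" for S where
  gen_id: "id \<in> genGroup S"
| gen_mult: "g \<in> S \<Longrightarrow> h \<in> genGroup S \<Longrightarrow> h \<circ> g \<in> genGroup S"
| gen_inv: "g \<in> S \<Longrightarrow> h \<in> genGroup S \<Longrightarrow> h \<circ> inv g \<in> genGroup S"

definition little_proj_group :: "'a set \<Rightarrow> ('a \<Rightarrow> ('a \<Rightarrow> 'a) set) \<Rightarrow> ('a \<Rightarrow> 'a) set" where
  "little_proj_group X U = genGroup (\<Union>x\<in>X. U x)"

definition local_moufang_set ::
  "'a set \<Rightarrow> 'a rel \<Rightarrow> ('a \<Rightarrow> ('a \<Rightarrow> 'a) set) \<Rightarrow> bool" where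
  "local_moufang_set X r U \<longleftrightarrow>
     equiv X r \<and>
     (\<exists>A\<in>X // r. \<exists>B\<in>X // r. \<exists>C\<in>X // r. A \<noteq> B \<and> A \<noteq> C \<and> B \<noteq> C) \<and>
     (\<forall>x\<in>X. is_subgroup (U x) (SymEq X r)) \<and>
     \<comment> \<open>LM0\<close>
     (\<forall>x\<in>X. \<forall>y\<in>X. (x, y) \<in> r \<longrightarrow> inducedGrp X r (U x) = inducedGrp X r (U y)) \<and>
     \<comment> \<open>LM1\<close>
     (\<forall>x\<in>X. (\<forall>u\<in>U x. u x = x) \<and>
        (\<forall>y\<in>X - cls r X x. \<forall>z\<in>X - cls r X x. \<exists>!u. u \<in> U x \<and> u y = z)) \<and>
     \<comment> \<open>LM1'\<close>
     (\<forall>x\<in>X. (\<forall>v\<in>inducedGrp X r (U x). v (cls r X x) = cls r X x) \<and>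
        (\<forall>C\<in>X // r - {cls r X x}. \<forall>D\<in>X // r - {cls r X x}.
           \<exists>!v. v \<in> inducedGrp X r (U x) \<and> v C = D)) \<and>
     \<comment> \<open>LM2\<close>
     (\<forall>x\<in>X. \<forall>g\<in>little_proj_group X U.
        (\<lambda>u. g \<circ> u \<circ> inv g) ` U x = U (g x))"

definition alpha :: "('a \<Rightarrow> ('a \<Rightarrow> 'a) set) \<Rightarrow> 'a \<Rightarrow> 'a \<Rightarrow> 'a \<Rightarrow> ('a \<Rightarrow> 'a)" where
  "alpha U zero infty x = (THE a. a \<in> U infty \<and> a zero = x)"

text \<open>mu_x: the unique element of U_0 alpha_x U_0 (products in right-action order)
interchanging 0 and infinity.\<close>
definition mu :: "('a \<Rightarrow> ('a \<Rightarrow> 'a) set) \<Rightarrow> 'a \<Rightarrow> 'a \<Rightarrow> 'a \<Rightarrow> ('a \<Rightarrow> 'a)" where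
  "mu U zero infty x = (THE m. m \<in> {v \<circ> alpha U zero infty x \<circ> u | u v. u \<in> U zero \<and> v \<in> U zero}
       \<and> m zero = infty \<and> m infty = zero)"

definition units :: "'a set \<Rightarrow> 'a rel \<Rightarrow> 'a \<Rightarrow> 'a \<Rightarrow> 'a set" where
  "units X r zero infty = {x \<in> X. (x, zero) \<notin> r \<and> (x, infty) \<notin> r}"

definition hua :: "'a set \<Rightarrow> 'a rel \<Rightarrow> ('a \<Rightarrow> ('a \<Rightarrow> 'a) set) \<Rightarrow> 'a \<Rightarrow> 'a \<Rightarrow> ('a \<Rightarrow> 'a) set" where
  "hua X r U zero infty = genGroup {mu U zero infty y \<circ> mu U zero infty x | x y.
       x \<in> units X r zero infty \<and> y \<in> units X r zero infty}"

definition Ucirc :: "'a set \<Rightarrow> 'a rel \<Rightarrow> ('a \<Rightarrow> ('a \<Rightarrow> 'a) set) \<Rightarrow> 'a \<Rightarrow> ('a \<Rightarrow> 'a) set" where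
  "Ucirc X r U x = {u \<in> U x. induced X r u = induced X r id}"

end

theory Submission
  imports Defs "HOL-Combinatorics.Permutations"
begin

text \<open>Given \<open>u \<in> U\<^sub>0\<degree>\<close> and \<open>v \<in> U\<^sub>\<infinity>\<close>: if \<open>v\<close> moves the class of \<open>0\<close>, then
  \<open>v = \<alpha>\<^sub>y\<close> for the unit \<open>y = v 0\<close>, and \<open>\<mu>\<^sub>y \<in> U\<^sub>0 \<alpha>\<^sub>y U\<^sub>0\<close> trades \<open>v\<close> for \<open>\<mu>\<^sub>y\<close> at the cost of
  factors from \<open>U\<^sub>0\<close>. Since \<open>u\<close> fixes the class of \<open>\<infinity>\<close>, the leftover factor from \<open>U\<^sub>0\<close> moves
  that class and therefore lies in \<open>U\<^sub>\<infinity> \<mu>\<^sub>x U\<^sub>\<infinity>\<close> for some unit \<open>x\<close>; conjugating by \<open>\<mu>\<^sub>y\<close>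
  yields the factor \<open>\<mu>\<^sub>y \<mu>\<^sub>x \<in> H\<close>. The resulting \<open>U\<^sub>0\<close>-factor lies in \<open>U\<^sub>0\<degree>\<close> because \<open>H\<close>
  fixes \<open>\<infinity>\<close>. If \<open>v\<close> fixes the class of \<open>0\<close>, write \<open>v = w \<circ> \<alpha>\<^sub>z\<close> for a unit \<open>z\<close> and apply
  this twice, using that \<open>H\<close> normalizes \<open>U\<^sub>\<infinity>\<close>.\<close>

lemma bij_SymEq: "g \<in> SymEq X r \<Longrightarrow> bij g"
  unfolding SymEq_def by (auto intro: permutes_bij bij_imp_permutes)

lemma bij_inv_f_f: "bij f \<Longrightarrow> inv f (f x) = x"
  by (simp add: bij_is_inj)

lemma bij_f_inv_f: "bij f \<Longrightarrow> f (inv f x) = x"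
  by (simp add: bij_is_surj surj_f_inv_f)

lemma genGroup_generator: "s \<in> S \<Longrightarrow> s \<in> genGroup S"
  using genGroup.gen_mult[OF _ genGroup.gen_id] by fastforce

lemma genGroup_inv_generator: "s \<in> S \<Longrightarrow> inv s \<in> genGroup S"
  using genGroup.gen_inv[OF _ genGroup.gen_id] by fastforce

lemma genGroup_comp: "g \<in> genGroup S \<Longrightarrow> k \<in> genGroup S \<Longrightarrow> k \<circ> g \<in> genGroup S"
proof (induction g rule: genGroup.induct)
  case gen_id
  then show ?case by simp
next
  case (gen_mult s h)
  then have "(k \<circ> h) \<circ> s \<in> genGroup S" by (blast intro: genGroup.gen_mult)
  then show ?case by (simp only: comp_assoc)
next
  case (gen_inv s h)
  then have "(k \<circ> h) \<circ> inv s \<in> genGroup S" by (blast intro: genGroup.gen_inv)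
  then show ?case by (simp only: comp_assoc)
qed

lemma bij_genGroup:
  assumes "\<forall>s\<in>S. bij s" and "g \<in> genGroup S"
  shows "bij g"
  using assms(2) by induction (use assms(1) in \<open>auto intro!: bij_comp bij_imp_bij_inv simp del: comp_apply simp: bij_id id_def[symmetric]\<close>)

lemma genGroup_inv:
  assumes "\<forall>s\<in>S. bij s" and "g \<in> genGroup S"
  shows "inv g \<in> genGroup S"
  using assms(2)
proof (induction g rule: genGroup.induct)
  case gen_id
  then show ?case by (simp only: inv_id genGroup.gen_id)
next
  case (gen_mult s h)
  have "bij s" "bij h" using gen_mult assms(1) bij_genGroup by auto
  then have "inv (h \<circ> s) = inv s \<circ> inv h" by (simp add: o_inv_distrib)
  then show ?case using genGroup_comp[OF gen_mult.IH genGroup_inv_generator[OF gen_mult.hyps(1)]]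
    by (simp only:)
next
  case (gen_inv s h)
  have "bij s" "bij h" using gen_inv assms(1) bij_genGroup by auto
  then have "inv (h \<circ> inv s) = s \<circ> inv h" by (simp add: o_inv_distrib bij_imp_bij_inv inv_inv_eq)
  then show ?case using genGroup_comp[OF gen_inv.IH genGroup_generator[OF gen_inv.hyps(1)]]
    by (simp only:)
qed

lemma genGroup_subset_genGroup:
  assumes "\<forall>s\<in>T. bij s" and "S \<subseteq> genGroup T"
  shows "genGroup S \<subseteq> genGroup T"
proof
  fix g assume "g \<in> genGroup S"
  then show "g \<in> genGroup T"
  proof induction
    case (gen_mult s h)
    then show ?case using assms(2) genGroup_comp by blast
  next
    case (gen_inv s h)
    then show ?case using assms genGroup_comp genGroup_inv by blast
  qed (rule genGroup.gen_id)
qed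

lemma genGroup_fixes:
  assumes "\<forall>s\<in>S. bij s \<and> s a = a" and "g \<in> genGroup S"
  shows "g a = a"
  using assms(2)
proof (induction g rule: genGroup.induct)
  case (gen_inv s h)
  then have "inv s a = a" using assms by (metis bij_inv_f_f)
  with gen_inv show ?case by simp
qed (use assms in auto)

locale local_moufang_set_basis =
  fixes X :: "'a set" and r :: "'a rel" and U :: "'a \<Rightarrow> ('a \<Rightarrow> 'a) set"
    and zero infty :: 'a
  assumes local_moufang_set: "local_moufang_set X r U"
    and zero_in_X: "zero \<in> X" and infty_in_X: "infty \<in> X"
    and zero_infty: "(zero, infty) \<notin> r"
begin

abbreviation "G \<equiv> little_proj_group X U"
abbreviation "H \<equiv> hua X r U zero infty"
abbreviation "\<alpha> \<equiv> alpha U zero infty"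
abbreviation "\<mu> \<equiv> mu U zero infty"

lemmas axioms_unfolded = local_moufang_set[unfolded local_moufang_set_def]

lemma equiv_r: "equiv X r"
  using axioms_unfolded by (elim conjE)

lemma three_classes: "\<exists>A\<in>X // r. \<exists>B\<in>X // r. \<exists>C\<in>X // r. A \<noteq> B \<and> A \<noteq> C \<and> B \<noteq> C"
  using axioms_unfolded by (elim conjE)

lemma root_subgroups: "\<forall>x\<in>X. is_subgroup (U x) (SymEq X r)"
  using axioms_unfolded by (elim conjE)

lemma LM1: "\<forall>x\<in>X. (\<forall>u\<in>U x. u x = x) \<and>
    (\<forall>y\<in>X - cls r X x. \<forall>z\<in>X - cls r X x. \<exists>!u. u \<in> U x \<and> u y = z)"
  using axioms_unfolded by (elim conjE)

lemma LM1': "\<forall>x\<in>X. (\<forall>v\<in>inducedGrp X r (U x). v (cls r X x) = cls r X x) \<and>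
    (\<forall>C\<in>X // r - {cls r X x}. \<forall>D\<in>X // r - {cls r X x}.
       \<exists>!v. v \<in> inducedGrp X r (U x) \<and> v C = D)"
  using axioms_unfolded by (elim conjE)

lemma LM2: "\<forall>x\<in>X. \<forall>g\<in>G. (\<lambda>u. g \<circ> u \<circ> inv g) ` U x = U (g x)"
  using axioms_unfolded by (elim conjE)

lemma rel_in_X: "(a, b) \<in> r \<Longrightarrow> a \<in> X \<and> b \<in> X"
  using equiv_r by (auto simp: equiv_def refl_on_def)

lemma rel_sym: "(a, b) \<in> r \<Longrightarrow> (b, a) \<in> r"
  using equiv_r by (auto simp: equiv_def sym_def)

lemma rel_trans: "(a, b) \<in> r \<Longrightarrow> (b, c) \<in> r \<Longrightarrow> (a, c) \<in> r"
  using equiv_r by (auto simp: equiv_def trans_def)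

lemma infty_zero: "(infty, zero) \<notin> r"
  using zero_infty rel_sym by blast

subsection \<open>Root groups\<close>

lemma root_subgroup: "x \<in> X \<Longrightarrow> is_subgroup (U x) (SymEq X r)"
  using root_subgroups by blast

lemma root_SymEq: "x \<in> X \<Longrightarrow> f \<in> U x \<Longrightarrow> f \<in> SymEq X r"
  using root_subgroup[of x] unfolding is_subgroup_def by blast

lemma bij_root: "x \<in> X \<Longrightarrow> f \<in> U x \<Longrightarrow> bij f"
  using root_SymEq bij_SymEq by blast

lemma root_comp: "x \<in> X \<Longrightarrow> f \<in> U x \<Longrightarrow> g \<in> U x \<Longrightarrow> g \<circ> f \<in> U x"
  using root_subgroup[of x] unfolding is_subgroup_def by blast

lemma root_inv: "x \<in> X \<Longrightarrow> f \<in> U x \<Longrightarrow> inv f \<in> U x"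
  using root_subgroup[of x] unfolding is_subgroup_def by blast

lemma id_SymEq: "id \<in> SymEq X r"
  using root_subgroup[OF zero_in_X] unfolding is_subgroup_def by blast

lemma SymEq_closed: "f \<in> SymEq X r \<Longrightarrow> a \<in> X \<Longrightarrow> f a \<in> X"
  by (auto simp: SymEq_def bij_betw_apply)

lemma root_closed: "x \<in> X \<Longrightarrow> f \<in> U x \<Longrightarrow> a \<in> X \<Longrightarrow> f a \<in> X"
  using root_SymEq SymEq_closed by blast

lemma root_rel_iff:
  "x \<in> X \<Longrightarrow> f \<in> U x \<Longrightarrow> a \<in> X \<Longrightarrow> b \<in> X \<Longrightarrow> (f a, f b) \<in> r \<longleftrightarrow> (a, b) \<in> r"
  using root_SymEq by (auto simp: SymEq_def)

lemma root_fixes: "x \<in> X \<Longrightarrow> f \<in> U x \<Longrightarrow> f x = x"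
  using LM1 by blast

lemma root_preserves_far:
  "x \<in> X \<Longrightarrow> f \<in> U x \<Longrightarrow> a \<in> X \<Longrightarrow> (x, a) \<notin> r \<Longrightarrow> (x, f a) \<notin> r"
  using root_rel_iff[of x f x a] root_fixes[of x f] by simp

lemma root_sharply_transitive:
  assumes "x \<in> X" "a \<in> X" "b \<in> X" "(x, a) \<notin> r" "(x, b) \<notin> r"
  shows "\<exists>!f. f \<in> U x \<and> f a = b"
proof -
  have "a \<in> X - cls r X x" "b \<in> X - cls r X x"
    using assms by (auto simp: cls_def)
  then show ?thesis by (rule conjunct2[OF bspec[OF LM1 assms(1)], rule_format])
qed

lemma root_transitive:
  "x \<in> X \<Longrightarrow> a \<in> X \<Longrightarrow> b \<in> X \<Longrightarrow> (x, a) \<notin> r \<Longrightarrow> (x, b) \<notin> r \<Longrightarrow> \<exists>f\<in>U x. f a = b"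
  using ex1_implies_ex[OF root_sharply_transitive] by blast

lemma root_eqI:
  assumes "x \<in> X" "a \<in> X" "(x, a) \<notin> r" "f \<in> U x" "g \<in> U x" "f a = g a"
  shows "f = g"
proof -
  have "\<exists>!h. h \<in> U x \<and> h a = f a"
    by (rule root_sharply_transitive[OF assms(1,2) root_closed[OF assms(1,4,2)] assms(3)
          root_preserves_far[OF assms(1,4,2,3)]])
  then show ?thesis
    using assms(4-6) by (metis the1_equality)
qed

subsection \<open>Action on the classes\<close>

lemma cls_eq_Image: "a \<in> X \<Longrightarrow> cls r X a = r `` {a}"
  using rel_in_X by (auto simp: cls_def)

lemma SymEq_image_class:
  assumes f: "f \<in> SymEq X r" and a: "a \<in> X"
  shows "f ` (r `` {a}) = r `` {f a}"
proof -
  have onto: "f ` X = X" and rel: "\<And>b. b \<in> X \<Longrightarrow> (a, b) \<in> r \<longleftrightarrow> (f a, f b) \<in> r"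
    using f a by (auto simp: SymEq_def bij_betw_def)
  show ?thesis
  proof (intro equalityI subsetI)
    fix c assume "c \<in> f ` (r `` {a})"
    then show "c \<in> r `` {f a}" using rel rel_in_X by blast
  next
    fix c assume c: "c \<in> r `` {f a}"
    then obtain b where "b \<in> X" "c = f b" using onto rel_in_X by blast
    then show "c \<in> f ` (r `` {a})" using c rel by blast
  qed
qed

lemma induced_class:
  "f \<in> SymEq X r \<Longrightarrow> a \<in> X \<Longrightarrow> induced X r f (r `` {a}) = r `` {f a}"
  using SymEq_image_class by (simp add: induced_def quotientI)

lemma induced_eq_id_iff:
  assumes f: "f \<in> SymEq X r"
  shows "induced X r f = induced X r id \<longleftrightarrow> (\<forall>a\<in>X. (f a, a) \<in> r)"
proof -
  have "induced X r f = induced X r id \<longleftrightarrow>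
      (\<forall>C\<in>X // r. induced X r f C = induced X r id C)"
    by (auto simp: fun_eq_iff induced_def)
  also have "\<dots> \<longleftrightarrow> (\<forall>a\<in>X. r `` {f a} = r `` {a})"
    using induced_class[OF f] induced_class[OF id_SymEq] by (simp add: quotient_def)
  also have "\<dots> \<longleftrightarrow> (\<forall>a\<in>X. (f a, a) \<in> r)"
    using eq_equiv_class_iff[OF equiv_r] SymEq_closed[OF f] by blast
  finally show ?thesis .
qed

lemma Ucirc_iff:
  "x \<in> X \<Longrightarrow> u \<in> Ucirc X r U x \<longleftrightarrow> u \<in> U x \<and> (\<forall>a\<in>X. (u a, a) \<in> r)"
  using induced_eq_id_iff root_SymEq by (auto simp: Ucirc_def)

text \<open>By sharpness in (LM1'), \<open>f\<close> and \<open>id\<close> induce the same permutation of the classes,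
  as both fix the class of \<open>y\<close>.\<close>

lemma root_fixing_class_in_Ucirc:
  assumes x: "x \<in> X" and y: "y \<in> X" "(x, y) \<notin> r"
    and f: "f \<in> U x" and fy: "(f y, y) \<in> r"
  shows "f \<in> Ucirc X r U x"
proof -
  let ?C = "r `` {y}"
  have "?C \<noteq> r `` {x}"
    using eq_equiv_class_iff[OF equiv_r] x y by blast
  then have C: "?C \<in> X // r - {cls r X x}"
    using y cls_eq_Image[OF x] by (simp add: quotientI)
  have "\<exists>!v. v \<in> inducedGrp X r (U x) \<and> v ?C = ?C"
    by (rule conjunct2[OF bspec[OF LM1' x], rule_format, OF C C])
  moreover have "induced X r f \<in> inducedGrp X r (U x)" "induced X r id \<in> inducedGrp X r (U x)"
    using f x root_subgroup by (auto simp: inducedGrp_def is_subgroup_def)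
  moreover have "induced X r f ?C = ?C" "induced X r id ?C = ?C"
    using induced_class[OF root_SymEq[OF x f] y(1)] induced_class[OF id_SymEq y(1)]
      eq_equiv_class_iff[OF equiv_r] root_closed[OF x f y(1)] y(1) fy
    by auto
  ultimately have "induced X r f = induced X r id" by (metis the1_equality)
  then show ?thesis using f by (simp add: Ucirc_def)
qed

subsection \<open>The little projective group and the Hua subgroup\<close>

lemma bij_roots: "\<forall>s\<in>(\<Union>x\<in>X. U x). bij s"
  using bij_root by blast

lemma root_in_G: "x \<in> X \<Longrightarrow> f \<in> U x \<Longrightarrow> f \<in> G"
  unfolding little_proj_group_def by (rule genGroup_generator) blast

lemma G_comp: "f \<in> G \<Longrightarrow> g \<in> G \<Longrightarrow> g \<circ> f \<in> G"
  unfolding little_proj_group_def by (rule genGroup_comp)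

lemma G_inv: "f \<in> G \<Longrightarrow> inv f \<in> G"
  unfolding little_proj_group_def by (rule genGroup_inv[OF bij_roots])

lemma bij_G: "f \<in> G \<Longrightarrow> bij f"
  unfolding little_proj_group_def by (rule bij_genGroup[OF bij_roots])

lemma root_conj: "g \<in> G \<Longrightarrow> x \<in> X \<Longrightarrow> f \<in> U x \<Longrightarrow> g \<circ> f \<circ> inv g \<in> U (g x)"
  using LM2 by blast

lemma alpha_eqI: "a \<in> U infty \<Longrightarrow> \<alpha> (a zero) = a"
  unfolding alpha_def
  by (rule the_equality) (auto intro: root_eqI[OF infty_in_X zero_in_X infty_zero])

lemma alpha_in_root:
  assumes "x \<in> X" "(x, infty) \<notin> r"
  shows "\<alpha> x \<in> U infty" "\<alpha> x zero = x"
proof -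
  obtain a where "a \<in> U infty" "a zero = x"
    using root_transitive[OF infty_in_X zero_in_X assms(1) infty_zero] assms rel_sym by blast
  then show "\<alpha> x \<in> U infty" "\<alpha> x zero = x" using alpha_eqI by auto
qed

text \<open>The two factors from \<open>U\<^sub>0\<close> of any element of \<open>U\<^sub>0 \<alpha>\<^sub>x U\<^sub>0\<close> interchanging \<open>0\<close> and
  \<open>\<infinity>\<close> are determined by their values at a single point outside the class of \<open>0\<close>;
  this is why \<open>\<mu>\<^sub>x\<close> is well defined.\<close>

lemma swap_factor_values:
  assumes x: "x \<in> units X r zero infty" and u: "u \<in> U zero" and v: "v \<in> U zero"
    and swap: "(v \<circ> \<alpha> x \<circ> u) zero = infty" "(v \<circ> \<alpha> x \<circ> u) infty = zero"
  shows "v x = infty" "u infty = inv (\<alpha> x) zero"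
proof -
  have a: "\<alpha> x \<in> U infty" "\<alpha> x zero = x"
    using x alpha_in_root by (auto simp: units_def)
  show "v x = infty"
    using swap(1) a root_fixes[OF zero_in_X u] by simp
  have "v (\<alpha> x (u infty)) = v zero"
    using swap(2) root_fixes[OF zero_in_X v] by simp
  then have "\<alpha> x (u infty) = zero"
    using bij_root[OF zero_in_X v] by (metis bij_inv_f_f)
  then show "u infty = inv (\<alpha> x) zero"
    using bij_root[OF infty_in_X a(1)] by (metis bij_inv_f_f)
qed

lemma mu_factorization:
  assumes x: "x \<in> units X r zero infty"
  obtains u v where "u \<in> U zero" "v \<in> U zero" "\<mu> x = v \<circ> \<alpha> x \<circ> u"
    "\<mu> x zero = infty" "\<mu> x infty = zero"
proof -
  have xX: "x \<in> X" and x0: "(zero, x) \<notin> r" and xi: "(x, infty) \<notin> r"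
    using x rel_sym by (auto simp: units_def)
  have a: "\<alpha> x \<in> U infty" "\<alpha> x zero = x"
    using alpha_in_root[OF xX xi] by auto
  define p where "p = inv (\<alpha> x) zero"
  have pX: "p \<in> X"
    unfolding p_def using root_closed[OF infty_in_X root_inv[OF infty_in_X a(1)] zero_in_X] .
  have ap: "\<alpha> x p = zero"
    unfolding p_def using bij_root[OF infty_in_X a(1)] by (rule bij_f_inv_f)
  have "(zero, p) \<notin> r"
    using root_rel_iff[OF infty_in_X a(1) zero_in_X pX] a(2) ap x0 rel_sym by auto
  then obtain u where u: "u \<in> U zero" "u infty = p"
    using root_transitive[OF zero_in_X infty_in_X pX zero_infty] by blast
  obtain v where v: "v \<in> U zero" "v x = infty"
    using root_transitive[OF zero_in_X xX infty_in_X x0 zero_infty] by blast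
  let ?m = "v \<circ> \<alpha> x \<circ> u"
  have swap: "?m zero = infty" "?m infty = zero"
    using root_fixes[OF zero_in_X u(1)] root_fixes[OF zero_in_X v(1)] a u(2) v(2) ap by auto
  have "\<mu> x = ?m"
    unfolding mu_def
  proof (rule the_equality)
    show "?m \<in> {v \<circ> \<alpha> x \<circ> u | u v. u \<in> U zero \<and> v \<in> U zero} \<and> ?m zero = infty \<and> ?m infty = zero"
      using u v swap by blast
  next
    fix m assume "m \<in> {v \<circ> \<alpha> x \<circ> u | u v. u \<in> U zero \<and> v \<in> U zero} \<and> m zero = infty \<and> m infty = zero"
    then obtain u' v' where uv': "u' \<in> U zero" "v' \<in> U zero" "m = v' \<circ> \<alpha> x \<circ> u'"
      and swap': "(v' \<circ> \<alpha> x \<circ> u') zero = infty" "(v' \<circ> \<alpha> x \<circ> u') infty = zero"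
      by blast
    from swap_factor_values[OF x uv'(1,2) swap']
    have "v' = v" "u' = u"
      using root_eqI[OF zero_in_X xX x0 uv'(2) v(1)] v(2)
        root_eqI[OF zero_in_X infty_in_X zero_infty uv'(1) u(1)] u(2) p_def by auto
    then show "m = ?m" using uv'(3) by simp
  qed
  then show ?thesis using that u v swap by simp
qed

lemma mu_swaps: "x \<in> units X r zero infty \<Longrightarrow> \<mu> x zero = infty \<and> \<mu> x infty = zero"
  by (metis mu_factorization)

lemma mu_in_G:
  assumes x: "x \<in> units X r zero infty"
  shows "\<mu> x \<in> G"
proof -
  obtain u v where "u \<in> U zero" "v \<in> U zero" "\<mu> x = v \<circ> \<alpha> x \<circ> u"
    using mu_factorization[OF x] .
  moreover have "\<alpha> x \<in> U infty"
    using x alpha_in_root by (auto simp: units_def)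
  ultimately show ?thesis
    using root_in_G[OF zero_in_X] root_in_G[OF infty_in_X] G_comp by metis
qed

lemma hua_generators_in_G:
  "{\<mu> y \<circ> \<mu> x | x y. x \<in> units X r zero infty \<and> y \<in> units X r zero infty} \<subseteq> G"
  using mu_in_G G_comp by blast

lemma hua_in_G: "h \<in> H \<Longrightarrow> h \<in> G"
  using genGroup_subset_genGroup[OF bij_roots] hua_generators_in_G
  unfolding hua_def little_proj_group_def by blast

lemma hua_fixes_infty: "h \<in> H \<Longrightarrow> h infty = infty"
  unfolding hua_def
  by (rule genGroup_fixes) (use hua_generators_in_G bij_G mu_swaps in auto)

lemma hua_comp: "f \<in> H \<Longrightarrow> g \<in> H \<Longrightarrow> g \<circ> f \<in> H"
  unfolding hua_def by (rule genGroup_comp)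

lemma mu_mu_in_hua:
  "x \<in> units X r zero infty \<Longrightarrow> y \<in> units X r zero infty \<Longrightarrow> \<mu> y \<circ> \<mu> x \<in> H"
  unfolding hua_def by (rule genGroup_generator) blast

lemma unit_exists: "\<exists>z. z \<in> units X r zero infty"
proof (rule ccontr)
  assume "\<nexists>z. z \<in> units X r zero infty"
  then have "\<forall>z\<in>X. (z, zero) \<in> r \<or> (z, infty) \<in> r"
    by (auto simp: units_def)
  then have "\<forall>C\<in>X // r. C = r `` {zero} \<or> C = r `` {infty}"
    using equiv_class_eq[OF equiv_r] rel_sym by (fastforce elim!: quotientE)
  then show False
    using three_classes by metis
qed

subsection \<open>Factorizations\<close>

text \<open>An element of \<open>U\<^sub>0\<close> moving the class of \<open>\<infinity>\<close> lies in \<open>U\<^sub>\<infinity> \<mu>\<^sub>x U\<^sub>\<infinity>\<close>: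
  the unit \<open>x\<close> is chosen so that \<open>\<alpha>\<^sub>x\<^sup>-\<^sup>1\<close> maps \<open>0\<close> to \<open>d \<infinity>\<close>, which forces \<open>d\<close> to be the
  right-hand \<open>U\<^sub>0\<close>-factor of \<open>\<mu>\<^sub>x\<close>.\<close>

lemma root_zero_factorization:
  assumes d: "d \<in> U zero" and far: "(d infty, infty) \<notin> r"
  obtains a x b where "a \<in> U infty" "x \<in> units X r zero infty" "b \<in> U infty"
    "d = a \<circ> \<mu> x \<circ> b"
proof -
  define w where "w = d infty"
  have wX: "w \<in> X" and w0: "(zero, w) \<notin> r"
    unfolding w_def using root_closed[OF zero_in_X d infty_in_X]
      root_preserves_far[OF zero_in_X d infty_in_X zero_infty] by auto
  obtain a where a: "a \<in> U infty" "a zero = w"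
    using root_transitive[OF infty_in_X zero_in_X wX infty_zero] far rel_sym w_def by blast
  have ba: "bij a" using bij_root[OF infty_in_X a(1)] .
  define x where "x = inv a zero"
  have ia: "inv a \<in> U infty" using root_inv[OF infty_in_X a(1)] .
  have xX: "x \<in> X" and ix: "(infty, x) \<notin> r"
    unfolding x_def using root_closed[OF infty_in_X ia zero_in_X]
      root_preserves_far[OF infty_in_X ia zero_in_X infty_zero] by auto
  have "(x, zero) \<notin> r"
    using root_rel_iff[OF infty_in_X a(1) xX zero_in_X] a(2) w0 bij_f_inv_f[OF ba]
    unfolding x_def by simp
  then have x: "x \<in> units X r zero infty"
    using xX ix rel_sym by (auto simp: units_def)
  have alpha_x: "\<alpha> x = inv a"
    using alpha_eqI[OF ia] x_def by simp
  obtain u v where uv: "u \<in> U zero" "v \<in> U zero" "\<mu> x = v \<circ> inv a \<circ> u"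
    and swap: "\<mu> x zero = infty" "\<mu> x infty = zero"
    using mu_factorization[OF x] alpha_x by metis
  have "u infty = w"
    using swap_factor_values(2)[OF x uv(1,2)] swap uv(3) alpha_x a(2) ba
    by (simp add: inv_inv_eq)
  then have "u = d"
    using root_eqI[OF zero_in_X infty_in_X zero_infty uv(1) d] w_def by simp
  define m where "m = \<mu> x"
  have mG: "m \<in> G" and bm: "bij m"
    unfolding m_def using mu_in_G[OF x] bij_G by auto
  define b where "b = inv m \<circ> inv v \<circ> m"
  have "inv m zero = infty"
    using swap(2) bm unfolding m_def by (metis bij_inv_f_f)
  then have b: "b \<in> U infty"
    using root_conj[OF G_inv[OF mG] zero_in_X root_inv[OF zero_in_X uv(2)]] bm
    unfolding b_def by (simp add: inv_inv_eq)
  have "d = a \<circ> m \<circ> b"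
  proof
    fix t
    have "(a \<circ> m \<circ> b) t = a (inv v (v (inv a (u t))))"
      using uv(3) bij_f_inv_f[OF bm] unfolding b_def m_def by simp
    also have "\<dots> = d t"
      using \<open>u = d\<close> bij_inv_f_f[OF bij_root[OF zero_in_X uv(2)]] bij_f_inv_f[OF ba] by simp
    finally show "d t = (a \<circ> m \<circ> b) t" ..
  qed
  then show ?thesis using that a(1) x b unfolding m_def by blast
qed

lemma Ucirc_of_factorization:
  assumes u: "u \<in> Ucirc X r U zero" and v: "v \<in> U infty" and c: "c \<in> U zero"
    and h: "h infty = infty" and a: "a \<in> U infty" and eq: "v \<circ> u = c \<circ> h \<circ> a"
  shows "c \<in> Ucirc X r U zero"
proof -
  have uU: "u \<in> U zero" and "(u infty, infty) \<in> r"
    using u Ucirc_iff[OF zero_in_X] infty_in_X by auto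
  then have "(v (u infty), v infty) \<in> r"
    using root_rel_iff[OF infty_in_X v root_closed[OF zero_in_X uU infty_in_X] infty_in_X] by simp
  moreover have "c infty = v (u infty)"
    using fun_cong[OF eq, of infty] h root_fixes[OF infty_in_X a] by simp
  ultimately have "(c infty, infty) \<in> r"
    using root_fixes[OF infty_in_X v] by simp
  then show ?thesis
    using root_fixing_class_in_Ucirc[OF zero_in_X infty_in_X zero_infty c] by simp
qed

text \<open>With \<open>y = v 0\<close> a unit we have \<open>\<alpha>\<^sub>y = v\<close>, so \<open>v\<close> is a \<open>U\<^sub>0\<close>-translate of \<open>\<mu>\<^sub>y\<close>; the
  remaining \<open>U\<^sub>0\<close>-factor \<open>d\<close> moves the class of \<open>\<infinity>\<close>, and factoring it as \<open>a \<mu>\<^sub>x b\<close> leaves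
  \<open>\<mu>\<^sub>y a \<mu>\<^sub>y\<^sup>-\<^sup>1 \<in> U\<^sub>0\<close> next to \<open>\<mu>\<^sub>y \<mu>\<^sub>x \<in> H\<close>.\<close>

lemma Ucirc_root_factorization_far:
  assumes u: "u \<in> Ucirc X r U zero" and v: "v \<in> U infty" and v0: "(v zero, zero) \<notin> r"
  obtains a h c where "a \<in> U infty" "h \<in> H" "c \<in> Ucirc X r U zero" "v \<circ> u = c \<circ> h \<circ> a"
proof -
  have uU: "u \<in> U zero" and u_infty: "(infty, u infty) \<in> r"
    using u Ucirc_iff[OF zero_in_X] infty_in_X rel_sym by auto
  define y where "y = v zero"
  have y: "y \<in> units X r zero infty"
    unfolding y_def using root_closed[OF infty_in_X v zero_in_X] v0
      root_preserves_far[OF infty_in_X v zero_in_X infty_zero] rel_sym by (auto simp: units_def)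
  have alpha_y: "\<alpha> y = v"
    using alpha_eqI[OF v] y_def by simp
  obtain g1 g2 where g: "g1 \<in> U zero" "g2 \<in> U zero" "\<mu> y = g2 \<circ> v \<circ> g1"
    and swap: "\<mu> y zero = infty" "\<mu> y infty = zero"
    using mu_factorization[OF y] alpha_y by metis
  have g1_infty: "g1 infty = inv v zero"
    using swap_factor_values(2)[OF y g(1,2)] swap g(3) alpha_y by simp
  have bg: "bij g1" "bij g2"
    using bij_root[OF zero_in_X] g by auto
  define d where "d = inv g1 \<circ> u"
  have d: "d \<in> U zero"
    unfolding d_def using root_comp[OF zero_in_X uU root_inv[OF zero_in_X g(1)]] .
  have "(d infty, infty) \<notin> r"
  proof
    assume "(d infty, infty) \<in> r"
    then have "(u infty, inv v zero) \<in> r"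
      using root_rel_iff[OF zero_in_X g(1) root_closed[OF zero_in_X d infty_in_X] infty_in_X]
        g1_infty bij_f_inv_f[OF bg(1)] unfolding d_def by simp
    then have "(infty, inv v zero) \<in> r"
      using u_infty rel_trans by blast
    then have "(v infty, v (inv v zero)) \<in> r"
      using root_rel_iff[OF infty_in_X v infty_in_X root_closed[OF infty_in_X root_inv[OF infty_in_X v] zero_in_X]]
      by simp
    then show False
      using root_fixes[OF infty_in_X v] bij_f_inv_f[OF bij_root[OF infty_in_X v]] infty_zero by simp
  qed
  then obtain a x b where axb: "a \<in> U infty" "x \<in> units X r zero infty" "b \<in> U infty"
    "d = a \<circ> \<mu> x \<circ> b"
    using root_zero_factorization[OF d] by blast
  have muG: "\<mu> y \<in> G" and bmu: "bij (\<mu> y)"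
    using mu_in_G[OF y] bij_G by auto
  define c where "c = inv g2 \<circ> (\<mu> y \<circ> a \<circ> inv (\<mu> y))"
  have c: "c \<in> U zero"
    using root_conj[OF muG infty_in_X axb(1)] swap(2) root_comp[OF zero_in_X _ root_inv[OF zero_in_X g(2)]]
    unfolding c_def by simp
  have h: "\<mu> y \<circ> \<mu> x \<in> H"
    using mu_mu_in_hua[OF axb(2) y] .
  have eq: "v \<circ> u = c \<circ> (\<mu> y \<circ> \<mu> x) \<circ> b"
  proof
    fix t
    have "(c \<circ> (\<mu> y \<circ> \<mu> x) \<circ> b) t = inv g2 (\<mu> y (d t))"
      using axb(4) bij_inv_f_f[OF bmu] unfolding c_def by simp
    also have "\<dots> = v (u t)"
      using g(3) bij_inv_f_f[OF bg(2)] bij_f_inv_f[OF bg(1)] unfolding d_def by simp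
    finally show "(v \<circ> u) t = (c \<circ> (\<mu> y \<circ> \<mu> x) \<circ> b) t" by simp
  qed
  have "c \<in> Ucirc X r U zero"
    using Ucirc_of_factorization[OF u v c hua_fixes_infty[OF h] axb(3) eq] .
  then show ?thesis using that axb(3) h eq by blast
qed

text \<open>If \<open>v\<close> fixes the class of \<open>0\<close>, then \<open>v = w \<circ> \<alpha>\<^sub>z\<close> with both \<open>\<alpha>\<^sub>z\<close> and \<open>w\<close> moving that
  class, so the previous lemma applies twice; the intermediate factor from \<open>U\<^sub>\<infinity>\<close> is then
  moved past \<open>h \<in> H\<close>, which fixes \<open>\<infinity>\<close> and hence normalizes \<open>U\<^sub>\<infinity>\<close>.\<close>

lemma Ucirc_root_factorization:
  assumes u: "u \<in> Ucirc X r U zero" and v: "v \<in> U infty"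
  obtains a h c where "a \<in> U infty" "h \<in> H" "c \<in> Ucirc X r U zero" "v \<circ> u = c \<circ> h \<circ> a"
proof (cases "(v zero, zero) \<in> r")
  case False
  then show ?thesis using Ucirc_root_factorization_far[OF u v] that by blast
next
  case True
  obtain z where z: "z \<in> units X r zero infty"
    using unit_exists by blast
  define az where "az = \<alpha> z"
  have az: "az \<in> U infty" "az zero = z" and baz: "bij az"
    using z alpha_in_root bij_root[OF infty_in_X] unfolding az_def units_def by auto
  define w where "w = v \<circ> inv az"
  have w: "w \<in> U infty"
    unfolding w_def using root_comp[OF infty_in_X root_inv[OF infty_in_X az(1)] v] .
  have v_eq: "v = w \<circ> az"
    unfolding w_def using baz by (simp add: fun_eq_iff bij_inv_f_f)
  obtain a h c where A: "a \<in> U infty" "h \<in> H" "c \<in> Ucirc X r U zero" "az \<circ> u = c \<circ> h \<circ> a"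
    using Ucirc_root_factorization_far[OF u az(1)] az(2) z by (auto simp: units_def)
  have w0: "(w zero, zero) \<notin> r"
  proof -
    define p where "p = inv az zero"
    have pX: "p \<in> X"
      unfolding p_def using root_closed[OF infty_in_X root_inv[OF infty_in_X az(1)] zero_in_X] .
    have "(p, zero) \<notin> r"
      using root_rel_iff[OF infty_in_X az(1) pX zero_in_X] az(2) z bij_f_inv_f[OF baz] rel_sym
      unfolding p_def units_def by auto
    moreover have "(v p, p) \<in> r"
      using root_fixing_class_in_Ucirc[OF infty_in_X zero_in_X infty_zero v True]
        Ucirc_iff[OF infty_in_X] pX by blast
    ultimately show ?thesis
      using rel_sym rel_trans unfolding w_def p_def by (metis comp_apply)
  qed
  obtain a' h' c' where B: "a' \<in> U infty" "h' \<in> H" "c' \<in> Ucirc X r U zero" "w \<circ> c = c' \<circ> h' \<circ> a'"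
    using Ucirc_root_factorization_far[OF A(3) w w0] by blast
  have hG: "h \<in> G" and bh: "bij h"
    using hua_in_G[OF A(2)] bij_G by auto
  have "inv h infty = infty"
    using hua_fixes_infty[OF A(2)] bh by (metis bij_inv_f_f)
  then have "inv h \<circ> a' \<circ> h \<in> U infty"
    using root_conj[OF G_inv[OF hG] infty_in_X B(1)] bh by (simp add: inv_inv_eq)
  then have a2: "inv h \<circ> a' \<circ> h \<circ> a \<in> U infty"
    using root_comp[OF infty_in_X A(1)] by simp
  have "v \<circ> u = c' \<circ> (h' \<circ> h) \<circ> (inv h \<circ> a' \<circ> h \<circ> a)"
  proof
    fix t
    have "(v \<circ> u) t = w (c (h (a t)))"
      using v_eq fun_cong[OF A(4), of t] by simp
    also have "\<dots> = (c' \<circ> (h' \<circ> h) \<circ> (inv h \<circ> a' \<circ> h \<circ> a)) t"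
      using fun_cong[OF B(4), of "h (a t)"] bij_f_inv_f[OF bh] by simp
    finally show "(v \<circ> u) t = (c' \<circ> (h' \<circ> h) \<circ> (inv h \<circ> a' \<circ> h \<circ> a)) t" .
  qed
  then show ?thesis using that a2 hua_comp[OF A(2) B(2)] B(3) by blast
qed

end

theorem mainTheorem5:
  assumes "local_moufang_set X r U"
    and "zero \<in> X" and "infty \<in> X" and "(zero, infty) \<notin> r"
  shows "{v \<circ> u | u v. u \<in> Ucirc X r U zero \<and> v \<in> U infty}
         \<subseteq> {c \<circ> h \<circ> a | a h c. a \<in> U infty \<and> h \<in> hua X r U zero infty \<and> c \<in> Ucirc X r U zero}"
proof -
  interpret local_moufang_set_basis X r U zero infty
    using assms by unfold_locales
  show ?thesis
    using Ucirc_root_factorization by blast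
qed

end
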